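(* Let $E[\mathscr{T}]$ be a stable locally $L^0$-convex module and let $E^\ast$ be the set of all continuous $L^0$-module morphisms $\mu:E\rightarrow L^0$. The collection of sets \[ U_{\{F_k\},\{A_k\},\varepsilon}:=\{x\in E\colon \sum 1_{A_k}\underset{\mu\in F_k}{\operatorname{ess\,sup}}|\mu(x)|<\varepsilon\}, \] where $\{A_k\}\in p(\Omega)$, $\{F_k\}$ is a countable collection of non-empty finite subsets of $E^\ast$ and $\varepsilon\in L^0$ with $\varepsilon>0$, is a neighborhood base of $0\in E$ for a stable locally $L^0$-convex topology (called the stable weak topology $\sigma_s(E,E^\ast)$).
   Context: $(\Omega,\Sigma,\mathbb{P})$ is a probability space, $L^0$ is the set of equivalence classes (modulo a.s. equality) of $\Sigma$-measurable real random variables, $\mathcal{F}$ is the associated measure algebra, and $p(\Omega)$ denotes the set of (countable) partitions of $\Omega$ in $\mathcal{F}$. An $L^0$-module $E$ has the countable concatenation property if for every sequence $\{x_k\}\subset E$ and every partition $\{A_k\}\in p(\Omega)$ there is a unique $x=\sum 1_{A_k}x_k\in E$ with $1_{A_k}x=1_{A_k}x_k$ for all $k$. A subset $S$ is stable if $\sum 1_{A_k}x_k\in S$ for all $\{x_k\}\subset S$, $\{A_k\}\in p(\Omega)$; a collection $\mathscr{C}$ of subsets is stable if each member is stable and $\sum 1_{A_k}S_k\in\mathscr{C}$ for all $\{S_k\}\subset\mathscr{C}$, $\{A_k\}\in p(\Omega)$. A stable locally $L^0$-convex module is a topological $L^0$-module with the countable concatenation property having a neighborhood base of $0$ which is a stable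 collection of $L^0$-convex, $L^0$-absorbing and $L^0$-balanced sets. $\operatorname{ess\,sup}$ denotes the essential supremum in $L^0$. *)

theory Defs
  imports "HOL-Probability.Probability"
begin

text \<open>Elements of L0 are represented by Borel measurable real functions on the
probability space M; all comparisons are almost sure.  The module E is the whole
type 'e (an abelian group) with an L0-scalar multiplication sm acting on
representatives, required to respect a.s. equality of scalars.\<close>

text \<open>Countable partitions in the measure algebra, represented by pointwise disjoint
measurable families covering the sample space (finite partitions are padded with
empty sets).\<close>
definition is_partition :: "'w measure \<Rightarrow> (nat \<Rightarrow> 'w set) \<Rightarrow> bool" where
  "is_partition M A \<longleftrightarrow> (\<forall>k. A k \<in> sets M) \<and> disjoint_family A \<and> (\<Union>k. A k) = space M"

definition L0_top :: "'w measure \<Rightarrow> ('w \<Rightarrow> real) topology" where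
  "L0_top M = topology (\<lambda>U. U \<subseteq> borel_measurable M \<and>
     (\<forall>f\<in>U. \<exists>e\<in>borel_measurable M. (AE \<omega> in M. 0 < e \<omega>) \<and>
        {g \<in> borel_measurable M. AE \<omega> in M. \<bar>g \<omega> - f \<omega>\<bar> < e \<omega>} \<subseteq> U))"

definition L0_esssup :: "'w measure \<Rightarrow> ('w \<Rightarrow> real) set \<Rightarrow> ('w \<Rightarrow> real)" where
  "L0_esssup M S = (SOME y. y \<in> borel_measurable M \<and> (\<forall>f\<in>S. AE \<omega> in M. f \<omega> \<le> y \<omega>) \<and>
     (\<forall>z\<in>borel_measurable M. (\<forall>f\<in>S. AE \<omega> in M. f \<omega> \<le> z \<omega>) \<longrightarrow> (AE \<omega> in M. y \<omega> \<le> z \<omega>)))"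

definition L0_concat :: "(nat \<Rightarrow> 'w set) \<Rightarrow> (nat \<Rightarrow> 'w \<Rightarrow> real) \<Rightarrow> 'w \<Rightarrow> real" where
  "L0_concat A y = (\<lambda>\<omega>. \<Sum>k. indicator (A k) \<omega> * y k \<omega>)"

definition L0_module :: "'w measure \<Rightarrow> (('w \<Rightarrow> real) \<Rightarrow> 'e::ab_group_add \<Rightarrow> 'e) \<Rightarrow> bool" where
  "L0_module M sm \<longleftrightarrow>
     (\<forall>f g x. f \<in> borel_measurable M \<longrightarrow> g \<in> borel_measurable M \<longrightarrow>
        (AE \<omega> in M. f \<omega> = g \<omega>) \<longrightarrow> sm f x = sm g x) \<and>
     (\<forall>f x y. f \<in> borel_measurable M \<longrightarrow> sm f (x + y) = sm f x + sm f y) \<and>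
     (\<forall>f g x. f \<in> borel_measurable M \<longrightarrow> g \<in> borel_measurable M \<longrightarrow>
        sm (\<lambda>\<omega>. f \<omega> + g \<omega>) x = sm f x + sm g x) \<and>
     (\<forall>f g x. f \<in> borel_measurable M \<longrightarrow> g \<in> borel_measurable M \<longrightarrow>
        sm (\<lambda>\<omega>. f \<omega> * g \<omega>) x = sm f (sm g x)) \<and>
     (\<forall>x. sm (\<lambda>\<omega>. 1) x = x)"

definition topological_L0_module ::
  "'w measure \<Rightarrow> (('w \<Rightarrow> real) \<Rightarrow> 'e::ab_group_add \<Rightarrow> 'e) \<Rightarrow> 'e topology \<Rightarrow> bool" where
  "topological_L0_module M sm T \<longleftrightarrow> L0_module M sm \<and> topspace T = UNIV \<and>
     continuous_map (prod_topology T T) T (\<lambda>(x, y). x + y) \<and>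
     continuous_map (prod_topology (L0_top M) T) T (\<lambda>(f, x). sm f x)"

definition countable_concatenation ::
  "'w measure \<Rightarrow> (('w \<Rightarrow> real) \<Rightarrow> 'e::ab_group_add \<Rightarrow> 'e) \<Rightarrow> bool" where
  "countable_concatenation M sm \<longleftrightarrow>
     (\<forall>A x. is_partition M A \<longrightarrow>
        (\<exists>!z. \<forall>k. sm (indicator (A k)) z = sm (indicator (A k)) (x k)))"

definition E_concat ::
  "(('w \<Rightarrow> real) \<Rightarrow> 'e::ab_group_add \<Rightarrow> 'e) \<Rightarrow> (nat \<Rightarrow> 'w set) \<Rightarrow> (nat \<Rightarrow> 'e) \<Rightarrow> 'e" where
  "E_concat sm A x = (THE z. \<forall>k. sm (indicator (A k)) z = sm (indicator (A k)) (x k))"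

definition stable_set ::
  "'w measure \<Rightarrow> (('w \<Rightarrow> real) \<Rightarrow> 'e::ab_group_add \<Rightarrow> 'e) \<Rightarrow> 'e set \<Rightarrow> bool" where
  "stable_set M sm S \<longleftrightarrow>
     (\<forall>A x. is_partition M A \<longrightarrow> (\<forall>k. x k \<in> S) \<longrightarrow> E_concat sm A x \<in> S)"

definition set_concat ::
  "(('w \<Rightarrow> real) \<Rightarrow> 'e::ab_group_add \<Rightarrow> 'e) \<Rightarrow> (nat \<Rightarrow> 'w set) \<Rightarrow> (nat \<Rightarrow> 'e set) \<Rightarrow> 'e set" where
  "set_concat sm A S = {E_concat sm A x | x. \<forall>k. x k \<in> S k}"

definition stable_collection ::
  "'w measure \<Rightarrow> (('w \<Rightarrow> real) \<Rightarrow> 'e::ab_group_add \<Rightarrow> 'e) \<Rightarrow> 'e set set \<Rightarrow> bool" where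
  "stable_collection M sm C \<longleftrightarrow> (\<forall>S\<in>C. stable_set M sm S) \<and>
     (\<forall>A S. is_partition M A \<longrightarrow> (\<forall>k. S k \<in> C) \<longrightarrow> set_concat sm A S \<in> C)"

definition L0_convex ::
  "'w measure \<Rightarrow> (('w \<Rightarrow> real) \<Rightarrow> 'e::ab_group_add \<Rightarrow> 'e) \<Rightarrow> 'e set \<Rightarrow> bool" where
  "L0_convex M sm C \<longleftrightarrow> (\<forall>x\<in>C. \<forall>y\<in>C. \<forall>l\<in>borel_measurable M.
     (AE \<omega> in M. 0 \<le> l \<omega> \<and> l \<omega> \<le> 1) \<longrightarrow> sm l x + sm (\<lambda>\<omega>. 1 - l \<omega>) y \<in> C)"

definition L0_absorbing ::
  "'w measure \<Rightarrow> (('w \<Rightarrow> real) \<Rightarrow> 'e::ab_group_add \<Rightarrow> 'e) \<Rightarrow> 'e set \<Rightarrow> bool" where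
  "L0_absorbing M sm C \<longleftrightarrow> (\<forall>x. \<exists>l\<in>borel_measurable M.
     (AE \<omega> in M. 0 < l \<omega>) \<and> (\<exists>c\<in>C. x = sm l c))"

definition L0_balanced ::
  "'w measure \<Rightarrow> (('w \<Rightarrow> real) \<Rightarrow> 'e::ab_group_add \<Rightarrow> 'e) \<Rightarrow> 'e set \<Rightarrow> bool" where
  "L0_balanced M sm C \<longleftrightarrow> (\<forall>x\<in>C. \<forall>l\<in>borel_measurable M.
     (AE \<omega> in M. \<bar>l \<omega>\<bar> \<le> 1) \<longrightarrow> sm l x \<in> C)"

definition nhds_base :: "'e topology \<Rightarrow> 'e \<Rightarrow> 'e set set \<Rightarrow> bool" where
  "nhds_base T a U \<longleftrightarrow>
     (\<forall>V\<in>U. \<exists>W. openin T W \<and> a \<in> W \<and> W \<subseteq> V) \<and>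
     (\<forall>W. openin T W \<and> a \<in> W \<longrightarrow> (\<exists>V\<in>U. V \<subseteq> W))"

definition stable_lc_L0_module ::
  "'w measure \<Rightarrow> (('w \<Rightarrow> real) \<Rightarrow> 'e::ab_group_add \<Rightarrow> 'e) \<Rightarrow> 'e topology \<Rightarrow> bool" where
  "stable_lc_L0_module M sm T \<longleftrightarrow> topological_L0_module M sm T \<and>
     countable_concatenation M sm \<and>
     (\<exists>U. nhds_base T 0 U \<and> stable_collection M sm U \<and>
        (\<forall>V\<in>U. L0_convex M sm V \<and> L0_absorbing M sm V \<and> L0_balanced M sm V))"

definition L0_dual ::
  "'w measure \<Rightarrow> (('w \<Rightarrow> real) \<Rightarrow> 'e::ab_group_add \<Rightarrow> 'e) \<Rightarrow> 'e topology \<Rightarrow> ('e \<Rightarrow> 'w \<Rightarrow> real) set" where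
  "L0_dual M sm T = {\<mu>. (\<forall>x. \<mu> x \<in> borel_measurable M) \<and>
     (\<forall>x y. AE \<omega> in M. \<mu> (x + y) \<omega> = \<mu> x \<omega> + \<mu> y \<omega>) \<and>
     (\<forall>f x. f \<in> borel_measurable M \<longrightarrow> (AE \<omega> in M. \<mu> (sm f x) \<omega> = f \<omega> * \<mu> x \<omega>)) \<and>
     continuous_map T (L0_top M) \<mu>}"

definition weak_nbhd ::
  "'w measure \<Rightarrow> (nat \<Rightarrow> ('e \<Rightarrow> 'w \<Rightarrow> real) set) \<Rightarrow> (nat \<Rightarrow> 'w set) \<Rightarrow> ('w \<Rightarrow> real) \<Rightarrow> 'e set" where
  "weak_nbhd M F A e = {x. AE \<omega> in M.
     L0_concat A (\<lambda>k. L0_esssup M ((\<lambda>\<mu> \<omega>'. \<bar>\<mu> x \<omega>'\<bar>) ` F k)) \<omega> < e \<omega>}"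

end

theory Submission
  imports Defs
begin

text \<open>A set U = weak_nbhd M F A e consists of the x with the pointwise bound
|mu x| < e a.s. on A k for all mu in F k, because the essential supremum of a finite
family is its pointwise maximum.  Finite intersections of such sets are again of this
form (common refinement of the partitions, union of the families, minimum of the
radii), and halving e gives a set whose sum with itself lies in U; so the translates of
these sets form a group topology.  Multiplication by L0 is continuous because on A k
the values |mu x| for mu in F k are bounded by their maximum, an element of L0.
Stability of the collection comes from the identity mu (sum 1_{A_k} x_k) = mu x_k a.s.
on A_k, valid for every L0-linear mu.\<close>

lemma is_partition_sets: "is_partition M A \<Longrightarrow> A k \<in> sets M"
  unfolding is_partition_def by auto

lemma is_partition_cover:
  assumes "is_partition M A" "\<omega> \<in> space M"
  shows "\<exists>k. \<omega> \<in> A k"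
  using assms unfolding is_partition_def by auto

lemma is_partition_unique: "is_partition M A \<Longrightarrow> \<omega> \<in> A k \<Longrightarrow> \<omega> \<in> A j \<Longrightarrow> j = k"
  unfolding is_partition_def disjoint_family_on_def by blast

lemma AE_is_partition:
  assumes "is_partition M A" "\<And>k. AE \<omega> in M. \<omega> \<in> A k \<longrightarrow> P \<omega>"
  shows "AE \<omega> in M. P \<omega>"
proof -
  have "AE \<omega> in M. \<forall>k. \<omega> \<in> A k \<longrightarrow> P \<omega>"
    by (rule AE_all_countable[THEN iffD2]) (use assms(2) in blast)
  then show ?thesis using AE_space
    by eventually_elim (use is_partition_cover[OF assms(1)] in blast)
qed

lemma L0_concat_eq:
  assumes "is_partition M A" "\<omega> \<in> A k"
  shows "L0_concat A y \<omega> = y k \<omega>"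
proof -
  have "indicator (A j) \<omega> * y j \<omega> = (if j = k then y j \<omega> else 0)" for j
    using is_partition_unique[OF assms(1) _ assms(2), of j] assms(2) by (cases "j = k") (auto simp: indicator_def)
  then have "(\<lambda>j. indicator (A j) \<omega> * y j \<omega>) sums y k \<omega>"
    using sums_single[of k "\<lambda>j. y j \<omega>"] by simp
  then show ?thesis unfolding L0_concat_def by (simp add: sums_iff)
qed

lemma borel_measurable_L0_concat:
  assumes "is_partition M A" "\<And>k. y k \<in> borel_measurable M"
  shows "L0_concat A y \<in> borel_measurable M"
  unfolding L0_concat_def using is_partition_sets[OF assms(1)]
  by (intro borel_measurable_suminf borel_measurable_times borel_measurable_indicator assms(2))

definition refine_partition :: "(nat \<Rightarrow> 'w set) \<Rightarrow> (nat \<Rightarrow> nat \<Rightarrow> 'w set) \<Rightarrow> nat \<Rightarrow> 'w set" where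
  "refine_partition B A n = B (fst (prod_decode n)) \<inter> A (fst (prod_decode n)) (snd (prod_decode n))"

lemma refine_partition_prod_encode [simp]:
  "refine_partition B A (prod_encode (k, j)) = B k \<inter> A k j"
  unfolding refine_partition_def by simp

lemma is_partition_refine_partition:
  assumes B: "is_partition M B" and A: "\<And>k. is_partition M (A k)"
  shows "is_partition M (refine_partition B A)"
  unfolding is_partition_def
proof (intro conjI allI)
  fix n show "refine_partition B A n \<in> sets M"
    unfolding refine_partition_def using is_partition_sets[OF B] is_partition_sets[OF A] by auto
next
  show "disjoint_family (refine_partition B A)"
    unfolding disjoint_family_on_def
  proof (intro ballI impI)
    fix m n :: nat assume "m \<noteq> n"
    then have ne: "prod_decode m \<noteq> prod_decode n" using inj_prod_decode by (metis injD)
    show "refine_partition B A m \<inter> refine_partition B A n = {}"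
    proof (rule ccontr)
      assume "\<not> ?thesis"
      then obtain \<omega> where w: "\<omega> \<in> B (fst (prod_decode m))" "\<omega> \<in> A (fst (prod_decode m)) (snd (prod_decode m))"
        "\<omega> \<in> B (fst (prod_decode n))" "\<omega> \<in> A (fst (prod_decode n)) (snd (prod_decode n))"
        unfolding refine_partition_def by blast
      then have "fst (prod_decode m) = fst (prod_decode n)" using is_partition_unique[OF B] by blast
      moreover then have "snd (prod_decode m) = snd (prod_decode n)"
        using w is_partition_unique[OF A] by metis
      ultimately show False using ne by (simp add: prod_eq_iff)
    qed
  qed
next
  show "(\<Union>n. refine_partition B A n) = space M"
  proof
    show "(\<Union>n. refine_partition B A n) \<subseteq> space M"
      unfolding refine_partition_def using is_partition_sets[OF B] sets.sets_into_space by blast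
    show "space M \<subseteq> (\<Union>n. refine_partition B A n)"
    proof
      fix \<omega> assume "\<omega> \<in> space M"
      then obtain i j where "\<omega> \<in> B i" "\<omega> \<in> A i j"
        using is_partition_cover[OF B] is_partition_cover[OF A] by metis
      then show "\<omega> \<in> (\<Union>n. refine_partition B A n)"
        by (intro UN_I[of "prod_encode (i, j)"]) auto
    qed
  qed
qed

section \<open>The topology of L0\<close>

definition L0_open :: "'w measure \<Rightarrow> ('w \<Rightarrow> real) set \<Rightarrow> bool" where
  "L0_open M U \<longleftrightarrow> U \<subseteq> borel_measurable M \<and>
     (\<forall>f\<in>U. \<exists>e\<in>borel_measurable M. (AE \<omega> in M. 0 < e \<omega>) \<and>
        {g \<in> borel_measurable M. AE \<omega> in M. \<bar>g \<omega> - f \<omega>\<bar> < e \<omega>} \<subseteq> U)"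

lemma istopology_L0_open: "istopology (L0_open M)"
  unfolding istopology_def
proof (rule conjI; intro allI impI)
  fix S U
  assume S: "L0_open M S" and U: "L0_open M U"
  show "L0_open M (S \<inter> U)" unfolding L0_open_def
  proof (intro conjI ballI)
    show "S \<inter> U \<subseteq> borel_measurable M" using S unfolding L0_open_def by auto
    fix f assume "f \<in> S \<inter> U"
    then have fS: "f \<in> S" and fU: "f \<in> U" by auto
    obtain e1 e2 where e1: "e1 \<in> borel_measurable M" "AE \<omega> in M. 0 < e1 \<omega>"
        "{g \<in> borel_measurable M. AE \<omega> in M. \<bar>g \<omega> - f \<omega>\<bar> < e1 \<omega>} \<subseteq> S"
      and e2: "e2 \<in> borel_measurable M" "AE \<omega> in M. 0 < e2 \<omega>"
        "{g \<in> borel_measurable M. AE \<omega> in M. \<bar>g \<omega> - f \<omega>\<bar> < e2 \<omega>} \<subseteq> U"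
      using S fS U fU unfolding L0_open_def by meson
    show "\<exists>e\<in>borel_measurable M. (AE \<omega> in M. 0 < e \<omega>) \<and>
        {g \<in> borel_measurable M. AE \<omega> in M. \<bar>g \<omega> - f \<omega>\<bar> < e \<omega>} \<subseteq> S \<inter> U"
    proof (intro bexI[of _ "\<lambda>\<omega>. min (e1 \<omega>) (e2 \<omega>)"] conjI subsetI)
      show "(\<lambda>\<omega>. min (e1 \<omega>) (e2 \<omega>)) \<in> borel_measurable M" using e1(1) e2(1) by measurable
      show "AE \<omega> in M. 0 < min (e1 \<omega>) (e2 \<omega>)" using e1(2) e2(2) by eventually_elim simp
      fix g assume g: "g \<in> {g \<in> borel_measurable M. AE \<omega> in M. \<bar>g \<omega> - f \<omega>\<bar> < min (e1 \<omega>) (e2 \<omega>)}"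
      then have "AE \<omega> in M. \<bar>g \<omega> - f \<omega>\<bar> < e1 \<omega>" "AE \<omega> in M. \<bar>g \<omega> - f \<omega>\<bar> < e2 \<omega>"
        by (auto elim!: AE_mp intro!: AE_I2)
      then show "g \<in> S \<inter> U" using g e1(3) e2(3) by auto
    qed
  qed
next
  fix K assume "\<forall>S\<in>K. L0_open M S"
  then show "L0_open M (\<Union>K)" unfolding L0_open_def
    by (smt (verit, best) Union_iff subset_iff)
qed

lemma openin_L0_top: "openin (L0_top M) U \<longleftrightarrow> U \<subseteq> borel_measurable M \<and>
     (\<forall>f\<in>U. \<exists>e\<in>borel_measurable M. (AE \<omega> in M. 0 < e \<omega>) \<and>
        {g \<in> borel_measurable M. AE \<omega> in M. \<bar>g \<omega> - f \<omega>\<bar> < e \<omega>} \<subseteq> U)"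
  unfolding L0_top_def L0_open_def[symmetric] topology_inverse'[OF istopology_L0_open] by (rule refl)

lemma topspace_L0_top: "topspace (L0_top M) = borel_measurable M"
proof
  show "topspace (L0_top M) \<subseteq> borel_measurable M"
    unfolding topspace_def openin_L0_top by blast
  have "openin (L0_top M) (borel_measurable M)"
    unfolding openin_L0_top by (auto intro!: bexI[of _ "\<lambda>_. 1"])
  then show "borel_measurable M \<subseteq> topspace (L0_top M)" by (rule openin_subset)
qed

lemma openin_L0_top_ball:
  assumes "f \<in> borel_measurable M" "d \<in> borel_measurable M"
  shows "openin (L0_top M) {g \<in> borel_measurable M. AE \<omega> in M. \<bar>g \<omega> - f \<omega>\<bar> < d \<omega>}"
  unfolding openin_L0_top
proof (intro conjI ballI)
  fix g assume g: "g \<in> {g \<in> borel_measurable M. AE \<omega> in M. \<bar>g \<omega> - f \<omega>\<bar> < d \<omega>}"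
  show "\<exists>e\<in>borel_measurable M. (AE \<omega> in M. 0 < e \<omega>) \<and>
        {h \<in> borel_measurable M. AE \<omega> in M. \<bar>h \<omega> - g \<omega>\<bar> < e \<omega>}
          \<subseteq> {g \<in> borel_measurable M. AE \<omega> in M. \<bar>g \<omega> - f \<omega>\<bar> < d \<omega>}"
  proof (intro bexI[of _ "\<lambda>\<omega>. d \<omega> - \<bar>g \<omega> - f \<omega>\<bar>"] conjI subsetI)
    show "AE \<omega> in M. 0 < d \<omega> - \<bar>g \<omega> - f \<omega>\<bar>" using g by (auto elim!: AE_mp intro!: AE_I2)
    have "g \<in> borel_measurable M" using g by auto
    then show "(\<lambda>\<omega>. d \<omega> - \<bar>g \<omega> - f \<omega>\<bar>) \<in> borel_measurable M" using assms by measurable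
    fix h assume h: "h \<in> {h \<in> borel_measurable M. AE \<omega> in M. \<bar>h \<omega> - g \<omega>\<bar> < d \<omega> - \<bar>g \<omega> - f \<omega>\<bar>}"
    then have "AE \<omega> in M. \<bar>h \<omega> - g \<omega>\<bar> < d \<omega> - \<bar>g \<omega> - f \<omega>\<bar>" by auto
    then have "AE \<omega> in M. \<bar>h \<omega> - f \<omega>\<bar> < d \<omega>" by eventually_elim auto
    then show "h \<in> {g \<in> borel_measurable M. AE \<omega> in M. \<bar>g \<omega> - f \<omega>\<bar> < d \<omega>}" using h by auto
  qed
qed auto

lemma L0_esssup_finite:
  fixes S :: "('w \<Rightarrow> real) set"
  assumes "finite S" "S \<noteq> {}" "S \<subseteq> borel_measurable M"
  shows L0_esssup_le_Max: "AE \<omega> in M. L0_esssup M S \<omega> \<le> Max ((\<lambda>f. f \<omega>) ` S)"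
    and L0_esssup_upper: "\<And>f. f \<in> S \<Longrightarrow> AE \<omega> in M. f \<omega> \<le> L0_esssup M S \<omega>"
proof -
  define m where "m = (\<lambda>\<omega>. Max ((\<lambda>f. f \<omega>) ` S))"
  have m_meas: "m \<in> borel_measurable M" unfolding m_def
    by (rule borel_measurable_Max) (use assms in auto)
  have m_upper: "\<forall>f\<in>S. AE \<omega> in M. f \<omega> \<le> m \<omega>"
    unfolding m_def using assms by (auto intro!: AE_I2 Max_ge)
  have m_least: "\<forall>z\<in>borel_measurable M. (\<forall>f\<in>S. AE \<omega> in M. f \<omega> \<le> z \<omega>) \<longrightarrow> (AE \<omega> in M. m \<omega> \<le> z \<omega>)"
  proof (intro ballI impI)
    fix z assume "\<forall>f\<in>S. AE \<omega> in M. f \<omega> \<le> z \<omega>"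
    then have "AE \<omega> in M. \<forall>f\<in>S. f \<omega> \<le> z \<omega>" using assms(1) by (intro AE_finite_allI) auto
    then show "AE \<omega> in M. m \<omega> \<le> z \<omega>" unfolding m_def by eventually_elim (use assms in auto)
  qed
  define P where "P = (\<lambda>y. y \<in> borel_measurable M \<and> (\<forall>f\<in>S. AE \<omega> in M. f \<omega> \<le> y \<omega>) \<and>
     (\<forall>z\<in>borel_measurable M. (\<forall>f\<in>S. AE \<omega> in M. f \<omega> \<le> z \<omega>) \<longrightarrow> (AE \<omega> in M. y \<omega> \<le> z \<omega>)))"
  have "P m" unfolding P_def using m_meas m_upper m_least by blast
  then have Pe: "P (L0_esssup M S)" unfolding L0_esssup_def P_def[symmetric] by (rule someI[of P m])
  then show "AE \<omega> in M. L0_esssup M S \<omega> \<le> Max ((\<lambda>f. f \<omega>) ` S)"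
    unfolding P_def using m_meas m_upper by (auto simp: m_def)
  show "\<And>f. f \<in> S \<Longrightarrow> AE \<omega> in M. f \<omega> \<le> L0_esssup M S \<omega>"
    using Pe unfolding P_def by blast
qed

lemma L0_dual_measurable: "\<mu> \<in> L0_dual M sm T \<Longrightarrow> \<mu> x \<in> borel_measurable M"
  unfolding L0_dual_def by auto

lemma L0_dual_add: "\<mu> \<in> L0_dual M sm T \<Longrightarrow> AE \<omega> in M. \<mu> (x + y) \<omega> = \<mu> x \<omega> + \<mu> y \<omega>"
  unfolding L0_dual_def by auto

lemma L0_dual_scale: "\<mu> \<in> L0_dual M sm T \<Longrightarrow> f \<in> borel_measurable M \<Longrightarrow>
    AE \<omega> in M. \<mu> (sm f x) \<omega> = f \<omega> * \<mu> x \<omega>"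
  unfolding L0_dual_def by auto

lemma L0_dual_diff:
  assumes "\<mu> \<in> L0_dual M sm T"
  shows "AE \<omega> in M. \<mu> (x - y) \<omega> = \<mu> x \<omega> - \<mu> y \<omega>"
  using L0_dual_add[OF assms, of "x - y" y] by eventually_elim simp

lemma L0_dual_zero:
  assumes "\<mu> \<in> L0_dual M sm T"
  shows "AE \<omega> in M. \<mu> 0 \<omega> = 0"
  using L0_dual_add[OF assms, of 0 0] by eventually_elim simp

lemma zero_in_L0_dual: "(\<lambda>x \<omega>. 0) \<in> L0_dual M sm T"
  unfolding L0_dual_def by (auto simp: topspace_L0_top)

section \<open>The weak neighbourhoods of zero\<close>

definition weak_bounded ::
  "'w measure \<Rightarrow> (nat \<Rightarrow> ('e \<Rightarrow> 'w \<Rightarrow> real) set) \<Rightarrow> (nat \<Rightarrow> 'w set) \<Rightarrow> ('w \<Rightarrow> real) \<Rightarrow> 'e \<Rightarrow> bool" where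
  "weak_bounded M F A e x \<longleftrightarrow> (\<forall>k. \<forall>\<mu>\<in>F k. AE \<omega> in M. \<omega> \<in> A k \<longrightarrow> \<bar>\<mu> x \<omega>\<bar> < e \<omega>)"

definition weak_param :: "'w measure \<Rightarrow> (('w \<Rightarrow> real) \<Rightarrow> 'e::ab_group_add \<Rightarrow> 'e) \<Rightarrow> 'e topology \<Rightarrow>
    (nat \<Rightarrow> ('e \<Rightarrow> 'w \<Rightarrow> real) set) \<Rightarrow> (nat \<Rightarrow> 'w set) \<Rightarrow> ('w \<Rightarrow> real) \<Rightarrow> bool" where
  "weak_param M sm T F A e \<longleftrightarrow> is_partition M A \<and>
     (\<forall>k. finite (F k) \<and> F k \<noteq> {} \<and> F k \<subseteq> L0_dual M sm T) \<and>
     e \<in> borel_measurable M \<and> (AE \<omega> in M. 0 < e \<omega>)"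

definition weak_nbhds :: "'w measure \<Rightarrow> (('w \<Rightarrow> real) \<Rightarrow> 'e::ab_group_add \<Rightarrow> 'e) \<Rightarrow> 'e topology \<Rightarrow> 'e set set" where
  "weak_nbhds M sm T = {weak_nbhd M F A e | F A e.
     is_partition M A \<and>
     (\<forall>k. finite (F k) \<and> F k \<noteq> {} \<and> F k \<subseteq> L0_dual M sm T) \<and>
     e \<in> borel_measurable M \<and> (AE \<omega> in M. 0 < e \<omega>)}"

lemma weak_param_partition: "weak_param M sm T F A e \<Longrightarrow> is_partition M A"
  unfolding weak_param_def by auto

lemma weak_param_L0_dual: "weak_param M sm T F A e \<Longrightarrow> \<mu> \<in> F k \<Longrightarrow> \<mu> \<in> L0_dual M sm T"
  unfolding weak_param_def by auto

lemma weak_param_pos: "weak_param M sm T F A e \<Longrightarrow> AE \<omega> in M. 0 < e \<omega>"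
  unfolding weak_param_def by auto

lemma weak_param_exists: "\<exists>F A e. weak_param M sm T F A e"
proof -
  define A :: "nat \<Rightarrow> _" where "A = (\<lambda>k. if k = 0 then space M else {})"
  have "is_partition M A" unfolding is_partition_def A_def disjoint_family_on_def
    by (auto split: if_splits)
  then have "weak_param M sm T (\<lambda>k. {\<lambda>x \<omega>. 0}) A (\<lambda>_. 1)"
    unfolding weak_param_def using zero_in_L0_dual by auto
  then show ?thesis by blast
qed

lemma weak_param_half: "weak_param M sm T F A e \<Longrightarrow> weak_param M sm T F A (\<lambda>\<omega>. e \<omega> / 2)"
  unfolding weak_param_def by (auto elim!: AE_mp intro!: AE_I2)

lemma weak_param_shrink:
  assumes p: "weak_param M sm T F A e" and c: "c \<in> borel_measurable M"
    and c_nonneg: "\<And>\<omega>. \<omega> \<in> space M \<Longrightarrow> 0 \<le> c \<omega>"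
  shows "weak_param M sm T F A (\<lambda>\<omega>. e \<omega> / (2 * (c \<omega> + 1)))"
proof -
  have "e \<in> borel_measurable M" using p unfolding weak_param_def by auto
  then have "(\<lambda>\<omega>. e \<omega> / (2 * (c \<omega> + 1))) \<in> borel_measurable M" using c by measurable
  moreover have "AE \<omega> in M. 0 < e \<omega> / (2 * (c \<omega> + 1))"
    using weak_param_pos[OF p] AE_space
    by eventually_elim (use c_nonneg in \<open>auto intro!: divide_pos_pos add_nonneg_pos\<close>)
  ultimately show ?thesis using p unfolding weak_param_def by blast
qed

lemma weak_nbhd_eq:
  assumes "weak_param M sm T F A e"
  shows "weak_nbhd M F A e = {x. weak_bounded M F A e x}"
proof (intro set_eqI iffI; simp)
  fix x
  have A: "is_partition M A" and F: "\<And>k. finite (F k) \<and> F k \<noteq> {} \<and> F k \<subseteq> L0_dual M sm T"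
    using assms unfolding weak_param_def by auto
  define S where "S = (\<lambda>k. (\<lambda>\<mu> \<omega>'. \<bar>\<mu> x \<omega>'\<bar>) ` F k)"
  have S: "finite (S k)" "S k \<noteq> {}" "S k \<subseteq> borel_measurable M" for k
    using F[of k] L0_dual_measurable[of _ M sm T] unfolding S_def by auto
  {
    assume "x \<in> weak_nbhd M F A e"
    then have ae: "AE \<omega> in M. L0_concat A (\<lambda>k. L0_esssup M (S k)) \<omega> < e \<omega>"
      unfolding weak_nbhd_def S_def by simp
    show "weak_bounded M F A e x" unfolding weak_bounded_def
    proof (intro allI ballI)
      fix k \<mu> assume "\<mu> \<in> F k"
      then have "(\<lambda>\<omega>'. \<bar>\<mu> x \<omega>'\<bar>) \<in> S k" unfolding S_def by auto
      from L0_esssup_upper[OF S this]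
      show "AE \<omega> in M. \<omega> \<in> A k \<longrightarrow> \<bar>\<mu> x \<omega>\<bar> < e \<omega>"
        using ae by eventually_elim (use L0_concat_eq[OF A] in force)
    qed
  }
  {
    assume bounded: "weak_bounded M F A e x"
    have "AE \<omega> in M. \<omega> \<in> A k \<longrightarrow> L0_concat A (\<lambda>k. L0_esssup M (S k)) \<omega> < e \<omega>" for k
    proof -
      have "AE \<omega> in M. \<forall>\<mu>\<in>F k. \<omega> \<in> A k \<longrightarrow> \<bar>\<mu> x \<omega>\<bar> < e \<omega>"
        using bounded F[of k] unfolding weak_bounded_def by (intro AE_finite_allI) auto
      with L0_esssup_le_Max[OF S, of k]
      show ?thesis
      proof eventually_elim
        case (elim \<omega>)
        show ?case
        proof
          assume k: "\<omega> \<in> A k"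
          have "Max ((\<lambda>f. f \<omega>) ` S k) < e \<omega>"
            using elim k S[of k] F[of k] unfolding S_def by (subst Max_less_iff) auto
          then show "L0_concat A (\<lambda>k. L0_esssup M (S k)) \<omega> < e \<omega>"
            using elim(1) L0_concat_eq[OF A k] by simp
        qed
      qed
    qed
    then have "AE \<omega> in M. L0_concat A (\<lambda>k. L0_esssup M (S k)) \<omega> < e \<omega>"
      by (rule AE_is_partition[OF A])
    then show "x \<in> weak_nbhd M F A e" unfolding weak_nbhd_def S_def by simp
  }
qed

lemma weak_nbhds_iff:
  "V \<in> weak_nbhds M sm T \<longleftrightarrow> (\<exists>F A e. weak_param M sm T F A e \<and> V = {x. weak_bounded M F A e x})"
proof -
  have "V \<in> weak_nbhds M sm T \<longleftrightarrow> (\<exists>F A e. weak_param M sm T F A e \<and> V = weak_nbhd M F A e)"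
    unfolding weak_nbhds_def weak_param_def by blast
  then show ?thesis using weak_nbhd_eq by metis
qed

lemma weak_bounded_zero:
  assumes "weak_param M sm T F A e"
  shows "weak_bounded M F A e 0"
  unfolding weak_bounded_def
proof (intro allI ballI)
  fix k \<mu> assume "\<mu> \<in> F k"
  from L0_dual_zero[OF weak_param_L0_dual[OF assms this]] weak_param_pos[OF assms]
  show "AE \<omega> in M. \<omega> \<in> A k \<longrightarrow> \<bar>\<mu> 0 \<omega>\<bar> < e \<omega>"
    by eventually_elim auto
qed

lemma weak_bounded_add_half:
  assumes "weak_param M sm T F A e"
    and "weak_bounded M F A (\<lambda>\<omega>. e \<omega> / 2) x" "weak_bounded M F A (\<lambda>\<omega>. e \<omega> / 2) y"
  shows "weak_bounded M F A e (x + y)"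
  unfolding weak_bounded_def
proof (intro allI ballI)
  fix k \<mu> assume \<mu>: "\<mu> \<in> F k"
  from L0_dual_add[OF weak_param_L0_dual[OF assms(1) \<mu>], of x y]
    assms(2,3)[unfolded weak_bounded_def, rule_format, OF \<mu>]
  show "AE \<omega> in M. \<omega> \<in> A k \<longrightarrow> \<bar>\<mu> (x + y) \<omega>\<bar> < e \<omega>"
    by eventually_elim auto
qed

lemma weak_bounded_inter:
  assumes p1: "weak_param M sm T F1 A1 e1" and p2: "weak_param M sm T F2 A2 e2"
  shows "\<exists>F A e. weak_param M sm T F A e \<and>
    (\<forall>x. weak_bounded M F A e x \<longrightarrow> weak_bounded M F1 A1 e1 x \<and> weak_bounded M F2 A2 e2 x)"
proof -
  define C where "C = refine_partition A1 (\<lambda>_. A2)"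
  define F where "F = (\<lambda>n. F1 (fst (prod_decode n)) \<union> F2 (snd (prod_decode n)))"
  define e where "e = (\<lambda>\<omega>. min (e1 \<omega>) (e2 \<omega>))"
  have P1: "is_partition M A1" and P2: "is_partition M A2"
    using p1 p2 by (auto intro: weak_param_partition)
  have "is_partition M C" unfolding C_def by (rule is_partition_refine_partition[OF P1 P2])
  then have "weak_param M sm T F C e"
    using p1 p2 unfolding weak_param_def F_def e_def by (auto elim: AE_mp intro!: AE_I2)
  moreover have "weak_bounded M F1 A1 e1 x \<and> weak_bounded M F2 A2 e2 x"
    if bounded: "weak_bounded M F C e x" for x
  proof
    have on_C: "AE \<omega> in M. \<omega> \<in> A1 k \<and> \<omega> \<in> A2 j \<longrightarrow> \<bar>\<mu> x \<omega>\<bar> < e \<omega>"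
      if "\<mu> \<in> F (prod_encode (k, j))" for \<mu> k j
      using bounded that unfolding weak_bounded_def C_def by fastforce
    show "weak_bounded M F1 A1 e1 x" unfolding weak_bounded_def
    proof (intro allI ballI)
      fix k \<mu> assume "\<mu> \<in> F1 k"
      show "AE \<omega> in M. \<omega> \<in> A1 k \<longrightarrow> \<bar>\<mu> x \<omega>\<bar> < e1 \<omega>"
      proof (rule AE_is_partition[OF P2])
        fix j
        have "\<mu> \<in> F (prod_encode (k, j))" using \<open>\<mu> \<in> F1 k\<close> unfolding F_def by simp
        from on_C[OF this] show "AE \<omega> in M. \<omega> \<in> A2 j \<longrightarrow> \<omega> \<in> A1 k \<longrightarrow> \<bar>\<mu> x \<omega>\<bar> < e1 \<omega>"
          unfolding e_def by eventually_elim auto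
      qed
    qed
    show "weak_bounded M F2 A2 e2 x" unfolding weak_bounded_def
    proof (intro allI ballI)
      fix j \<mu> assume "\<mu> \<in> F2 j"
      show "AE \<omega> in M. \<omega> \<in> A2 j \<longrightarrow> \<bar>\<mu> x \<omega>\<bar> < e2 \<omega>"
      proof (rule AE_is_partition[OF P1])
        fix k
        have "\<mu> \<in> F (prod_encode (k, j))" using \<open>\<mu> \<in> F2 j\<close> unfolding F_def by simp
        from on_C[OF this] show "AE \<omega> in M. \<omega> \<in> A1 k \<longrightarrow> \<omega> \<in> A2 j \<longrightarrow> \<bar>\<mu> x \<omega>\<bar> < e2 \<omega>"
          unfolding e_def by eventually_elim auto
      qed
    qed
  qed
  ultimately show ?thesis by blast
qed

definition weak_gauge :: "(nat \<Rightarrow> ('e \<Rightarrow> 'w \<Rightarrow> real) set) \<Rightarrow> (nat \<Rightarrow> 'w set) \<Rightarrow> 'e \<Rightarrow> 'w \<Rightarrow> real" where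
  "weak_gauge F A x = L0_concat A (\<lambda>k \<omega>. Max ((\<lambda>\<mu>. \<bar>\<mu> x \<omega>\<bar>) ` F k))"

lemma borel_measurable_weak_gauge:
  assumes "weak_param M sm T F A e"
  shows "weak_gauge F A x \<in> borel_measurable M"
  unfolding weak_gauge_def
proof (rule borel_measurable_L0_concat[OF weak_param_partition[OF assms]])
  fix k
  have "finite (F k)" using assms unfolding weak_param_def by auto
  then show "(\<lambda>\<omega>. Max ((\<lambda>\<mu>. \<bar>\<mu> x \<omega>\<bar>) ` F k)) \<in> borel_measurable M"
    using L0_dual_measurable[OF weak_param_L0_dual[OF assms]] by (intro borel_measurable_Max) auto
qed

lemma weak_gauge_ge:
  "weak_param M sm T F A e \<Longrightarrow> \<omega> \<in> A k \<Longrightarrow> \<mu> \<in> F k \<Longrightarrow> \<bar>\<mu> x \<omega>\<bar> \<le> weak_gauge F A x \<omega>"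
  unfolding weak_gauge_def
  by (subst L0_concat_eq[of M]) (auto simp: weak_param_def intro!: Max_ge)

lemma weak_gauge_nonneg:
  assumes p: "weak_param M sm T F A e" and \<omega>: "\<omega> \<in> space M"
  shows "0 \<le> weak_gauge F A x \<omega>"
proof -
  obtain k where k: "\<omega> \<in> A k" using is_partition_cover[OF weak_param_partition[OF p] \<omega>] by blast
  obtain \<mu> where "\<mu> \<in> F k" using p unfolding weak_param_def by blast
  from weak_gauge_ge[OF p k this, of x] show ?thesis by linarith
qed

section \<open>The stable weak topology\<close>

definition weak_open :: "'w measure \<Rightarrow> (('w \<Rightarrow> real) \<Rightarrow> 'e::ab_group_add \<Rightarrow> 'e) \<Rightarrow> 'e topology \<Rightarrow> 'e set \<Rightarrow> bool" where
  "weak_open M sm T W \<longleftrightarrow>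
     (\<forall>x\<in>W. \<exists>F A e. weak_param M sm T F A e \<and> (\<forall>y. weak_bounded M F A e y \<longrightarrow> x + y \<in> W))"

lemma istopology_weak_open: "istopology (weak_open M sm T)"
  unfolding istopology_def
proof (rule conjI; intro allI impI)
  fix S U assume S: "weak_open M sm T S" and U: "weak_open M sm T U"
  show "weak_open M sm T (S \<inter> U)" unfolding weak_open_def
  proof
    fix x assume "x \<in> S \<inter> U"
    then obtain F1 A1 e1 F2 A2 e2
      where 1: "weak_param M sm T F1 A1 e1" "\<forall>y. weak_bounded M F1 A1 e1 y \<longrightarrow> x + y \<in> S"
        and 2: "weak_param M sm T F2 A2 e2" "\<forall>y. weak_bounded M F2 A2 e2 y \<longrightarrow> x + y \<in> U"
      using S U unfolding weak_open_def by blast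
    from weak_bounded_inter[OF 1(1) 2(1)] 1(2) 2(2)
    show "\<exists>F A e. weak_param M sm T F A e \<and> (\<forall>y. weak_bounded M F A e y \<longrightarrow> x + y \<in> S \<inter> U)"
      by blast
  qed
next
  fix K assume "\<forall>S\<in>K. weak_open M sm T S"
  then show "weak_open M sm T (\<Union>K)" unfolding weak_open_def by (meson UnionI Union_iff)
qed

definition weak_top :: "'w measure \<Rightarrow> (('w \<Rightarrow> real) \<Rightarrow> 'e::ab_group_add \<Rightarrow> 'e) \<Rightarrow> 'e topology \<Rightarrow> 'e topology" where
  "weak_top M sm T = topology (weak_open M sm T)"

lemma openin_weak_top: "openin (weak_top M sm T) W \<longleftrightarrow> weak_open M sm T W"
  unfolding weak_top_def topology_inverse'[OF istopology_weak_open] by (rule refl)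

lemma topspace_weak_top: "topspace (weak_top M sm T) = UNIV"
proof -
  have "weak_open M sm T UNIV" unfolding weak_open_def using weak_param_exists by blast
  then show ?thesis using openin_subset[of "weak_top M sm T" UNIV] openin_weak_top by blast
qed

text \<open>The translate x + U need not be weak-open; the open set W below consists of the
points z such that some weak neighbourhood z + U' lies inside x + U.\<close>

lemma weak_top_open_nbhd:
  assumes p: "weak_param M sm T F A e"
  shows "\<exists>W. openin (weak_top M sm T) W \<and> x \<in> W \<and> (\<forall>w\<in>W. weak_bounded M F A e (w - x))"
proof -
  define W where "W = {z. \<exists>F' A' e'. weak_param M sm T F' A' e' \<and>
    (\<forall>y. weak_bounded M F' A' e' y \<longrightarrow> weak_bounded M F A e (z + y - x))}"
  have "weak_open M sm T W" unfolding weak_open_def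
  proof
    fix z assume "z \<in> W"
    then obtain F' A' e' where p': "weak_param M sm T F' A' e'"
      and z: "\<forall>y. weak_bounded M F' A' e' y \<longrightarrow> weak_bounded M F A e (z + y - x)"
      unfolding W_def by blast
    have "z + y \<in> W" if "weak_bounded M F' A' (\<lambda>\<omega>. e' \<omega> / 2) y" for y
      unfolding W_def
    proof (intro CollectI exI conjI allI impI)
      show "weak_param M sm T F' A' (\<lambda>\<omega>. e' \<omega> / 2)" by (rule weak_param_half[OF p'])
      fix y' assume "weak_bounded M F' A' (\<lambda>\<omega>. e' \<omega> / 2) y'"
      then have "weak_bounded M F' A' e' (y + y')" using weak_bounded_add_half[OF p' that] by blast
      then show "weak_bounded M F A e (z + y + y' - x)" using z by (simp add: add.assoc)
    qed
    then show "\<exists>F A e. weak_param M sm T F A e \<and> (\<forall>y. weak_bounded M F A e y \<longrightarrow> z + y \<in> W)"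
      using weak_param_half[OF p'] by blast
  qed
  moreover have "x \<in> W" unfolding W_def using p by force
  moreover have "weak_bounded M F A e (w - x)" if "w \<in> W" for w
    using that weak_bounded_zero unfolding W_def by fastforce
  ultimately show ?thesis unfolding openin_weak_top by blast
qed

lemma nhds_base_weak_top: "nhds_base (weak_top M sm T) 0 (weak_nbhds M sm T)"
  unfolding nhds_base_def
proof (intro conjI ballI allI impI)
  fix V assume "V \<in> weak_nbhds M sm T"
  then obtain F A e where p: "weak_param M sm T F A e" and V: "V = {x. weak_bounded M F A e x}"
    unfolding weak_nbhds_iff by blast
  from weak_top_open_nbhd[OF p, of 0] obtain W where W: "openin (weak_top M sm T) W" "0 \<in> W"
    "\<forall>w\<in>W. weak_bounded M F A e (w - 0)" by blast
  then show "\<exists>W. openin (weak_top M sm T) W \<and> 0 \<in> W \<and> W \<subseteq> V" unfolding V by auto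
next
  fix W assume "openin (weak_top M sm T) W \<and> 0 \<in> W"
  then obtain F A e where p: "weak_param M sm T F A e" and W: "\<forall>y. weak_bounded M F A e y \<longrightarrow> 0 + y \<in> W"
    unfolding openin_weak_top weak_open_def by blast
  then have "{x. weak_bounded M F A e x} \<in> weak_nbhds M sm T" unfolding weak_nbhds_iff by blast
  moreover have "{x. weak_bounded M F A e x} \<subseteq> W" using W by auto
  ultimately show "\<exists>V\<in>weak_nbhds M sm T. V \<subseteq> W" by blast
qed

lemma continuous_map_weak_top_add:
  "continuous_map (prod_topology (weak_top M sm T) (weak_top M sm T)) (weak_top M sm T) (\<lambda>(x, y). x + y)"
  unfolding continuous_map_def topspace_prod_topology topspace_weak_top
proof (intro conjI allI impI)
  show "(\<lambda>(x, y). x + y) \<in> UNIV \<times> UNIV \<rightarrow> UNIV" by auto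
  fix W assume "openin (weak_top M sm T) W"
  then have W: "weak_open M sm T W" by (simp add: openin_weak_top)
  show "openin (prod_topology (weak_top M sm T) (weak_top M sm T)) {p \<in> UNIV \<times> UNIV. (\<lambda>(x, y). x + y) p \<in> W}"
    unfolding openin_prod_topology_alt
  proof (intro allI impI)
    fix x y assume "(x, y) \<in> {p \<in> UNIV \<times> UNIV. (\<lambda>(x, y). x + y) p \<in> W}"
    then obtain F A e where p: "weak_param M sm T F A e"
      and h: "\<forall>z. weak_bounded M F A e z \<longrightarrow> x + y + z \<in> W"
      using W unfolding weak_open_def by auto
    obtain U1 where U1: "openin (weak_top M sm T) U1" "x \<in> U1"
      "\<forall>w\<in>U1. weak_bounded M F A (\<lambda>\<omega>. e \<omega> / 2) (w - x)"
      using weak_top_open_nbhd[OF weak_param_half[OF p], of x] by blast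
    obtain U2 where U2: "openin (weak_top M sm T) U2" "y \<in> U2"
      "\<forall>w\<in>U2. weak_bounded M F A (\<lambda>\<omega>. e \<omega> / 2) (w - y)"
      using weak_top_open_nbhd[OF weak_param_half[OF p], of y] by blast
    have "U1 \<times> U2 \<subseteq> {p \<in> UNIV \<times> UNIV. (\<lambda>(x, y). x + y) p \<in> W}"
    proof clarsimp
      fix a b assume "a \<in> U1" "b \<in> U2"
      then have "weak_bounded M F A e ((a - x) + (b - y))"
        using U1(3) U2(3) weak_bounded_add_half[OF p] by blast
      then have "x + y + ((a - x) + (b - y)) \<in> W" using h by blast
      then show "a + b \<in> W" by (simp add: algebra_simps)
    qed
    then show "\<exists>U V. openin (weak_top M sm T) U \<and> openin (weak_top M sm T) V \<and> x \<in> U \<and> y \<in> V \<and>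
        U \<times> V \<subseteq> {p \<in> UNIV \<times> UNIV. (\<lambda>(x, y). x + y) p \<in> W}"
      using U1 U2 by blast
  qed
qed

lemma abs_mult_perturb_less:
  fixes g f a b B e :: real
  assumes g: "\<bar>g - f\<bar> < min 1 (e / (2 * (B + 1)))" and a: "\<bar>a\<bar> \<le> B"
    and b: "\<bar>b\<bar> < e / (2 * (\<bar>f\<bar> + 1))" and e: "0 < e"
  shows "\<bar>g * (a + b) - f * a\<bar> < e"
proof -
  have B: "0 \<le> B" using a by linarith
  have "\<bar>(g - f) * a\<bar> \<le> (e / (2 * (B + 1))) * B"
    unfolding abs_mult using g a by (intro mult_mono) auto
  also have "\<dots> = (e / 2) * (B / (B + 1))" by (simp add: field_simps)
  also have "\<dots> < (e / 2) * 1" using B e by (intro mult_strict_left_mono) auto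
  finally have 1: "\<bar>(g - f) * a\<bar> < e / 2" by simp
  have "\<bar>g * b\<bar> \<le> (\<bar>f\<bar> + 1) * (e / (2 * (\<bar>f\<bar> + 1)))"
    unfolding abs_mult using g b by (intro mult_mono) auto
  also have "\<dots> = e / 2" by (simp add: field_simps)
  finally have 2: "\<bar>g * b\<bar> \<le> e / 2" .
  have "g * (a + b) - f * a = (g - f) * a + g * b" by (simp add: algebra_simps)
  then show ?thesis using 1 2 by linarith
qed

lemma weak_bounded_scale_diff:
  assumes p: "weak_param M sm T F A e"
    and f: "f \<in> borel_measurable M" and g: "g \<in> borel_measurable M"
    and gf: "AE \<omega> in M. \<bar>g \<omega> - f \<omega>\<bar> < min 1 (e \<omega> / (2 * (weak_gauge F A x \<omega> + 1)))"
    and yx: "weak_bounded M F A (\<lambda>\<omega>. e \<omega> / (2 * (\<bar>f \<omega>\<bar> + 1))) (y - x)"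
  shows "weak_bounded M F A e (sm g y - sm f x)"
  unfolding weak_bounded_def
proof (intro allI ballI)
  fix k \<mu> assume \<mu>F: "\<mu> \<in> F k"
  have \<mu>: "\<mu> \<in> L0_dual M sm T" by (rule weak_param_L0_dual[OF p \<mu>F])
  have "AE \<omega> in M. \<mu> y \<omega> = \<mu> x \<omega> + \<mu> (y - x) \<omega>"
    using L0_dual_add[OF \<mu>, of x "y - x"] by simp
  with L0_dual_diff[OF \<mu>, of "sm g y" "sm f x"] L0_dual_scale[OF \<mu> g, of y] L0_dual_scale[OF \<mu> f, of x]
    yx[unfolded weak_bounded_def, rule_format, OF \<mu>F] gf weak_param_pos[OF p]
  show "AE \<omega> in M. \<omega> \<in> A k \<longrightarrow> \<bar>\<mu> (sm g y - sm f x) \<omega>\<bar> < e \<omega>"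
  proof eventually_elim
    case (elim \<omega>)
    show ?case
    proof
      assume k: "\<omega> \<in> A k"
      from abs_mult_perturb_less[OF _ weak_gauge_ge[OF p k \<mu>F]]
      show "\<bar>\<mu> (sm g y - sm f x) \<omega>\<bar> < e \<omega>" using elim k by auto
    qed
  qed
qed

lemma continuous_map_weak_top_scale:
  "continuous_map (prod_topology (L0_top M) (weak_top M sm T)) (weak_top M sm T) (\<lambda>(f, x). sm f x)"
  unfolding continuous_map_def topspace_prod_topology topspace_weak_top topspace_L0_top
proof (intro conjI allI impI)
  show "(\<lambda>(f, x). sm f x) \<in> borel_measurable M \<times> UNIV \<rightarrow> UNIV" by auto
  fix W assume "openin (weak_top M sm T) W"
  then have W: "weak_open M sm T W" by (simp add: openin_weak_top)
  show "openin (prod_topology (L0_top M) (weak_top M sm T))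
      {p \<in> borel_measurable M \<times> UNIV. (\<lambda>(f, x). sm f x) p \<in> W}"
    unfolding openin_prod_topology_alt
  proof (intro allI impI)
    fix f x assume "(f, x) \<in> {p \<in> borel_measurable M \<times> UNIV. (\<lambda>(f, x). sm f x) p \<in> W}"
    then have f: "f \<in> borel_measurable M" and fx: "sm f x \<in> W" by auto
    then obtain F A e where p: "weak_param M sm T F A e"
      and h: "\<forall>z. weak_bounded M F A e z \<longrightarrow> sm f x + z \<in> W"
      using W unfolding weak_open_def by blast
    define d where "d = (\<lambda>\<omega>. min 1 (e \<omega> / (2 * (weak_gauge F A x \<omega> + 1))))"
    define e' where "e' = (\<lambda>\<omega>. e \<omega> / (2 * (\<bar>f \<omega>\<bar> + 1)))"
    have "weak_param M sm T F A (\<lambda>\<omega>. e \<omega> / (2 * (weak_gauge F A x \<omega> + 1)))"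
      by (rule weak_param_shrink[OF p borel_measurable_weak_gauge[OF p] weak_gauge_nonneg[OF p]])
    then have r: "(\<lambda>\<omega>. e \<omega> / (2 * (weak_gauge F A x \<omega> + 1))) \<in> borel_measurable M"
      and r_pos: "AE \<omega> in M. 0 < e \<omega> / (2 * (weak_gauge F A x \<omega> + 1))"
      unfolding weak_param_def by auto
    have d: "d \<in> borel_measurable M" unfolding d_def using r by measurable
    have d_pos: "AE \<omega> in M. 0 < d \<omega>" using r_pos by eventually_elim (simp add: d_def)
    have "weak_param M sm T F A e'"
      unfolding e'_def by (rule weak_param_shrink[OF p]) (use f in auto)
    then obtain U2 where U2: "openin (weak_top M sm T) U2" "x \<in> U2"
      "\<forall>y\<in>U2. weak_bounded M F A e' (y - x)"
      using weak_top_open_nbhd[of M sm T F A e' x] by blast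
    define U1 where "U1 = {g \<in> borel_measurable M. AE \<omega> in M. \<bar>g \<omega> - f \<omega>\<bar> < d \<omega>}"
    have U1: "openin (L0_top M) U1" unfolding U1_def by (rule openin_L0_top_ball[OF f d])
    have "f \<in> U1" unfolding U1_def using f d_pos by auto
    moreover have "U1 \<times> U2 \<subseteq> {p \<in> borel_measurable M \<times> UNIV. (\<lambda>(f, x). sm f x) p \<in> W}"
    proof clarsimp
      fix g y assume g: "g \<in> U1" and y: "y \<in> U2"
      have "weak_bounded M F A e (sm g y - sm f x)"
        by (rule weak_bounded_scale_diff[OF p f])
          (use g U2(3) y in \<open>auto simp: U1_def d_def e'_def\<close>)
      then have "sm f x + (sm g y - sm f x) \<in> W" using h by blast
      then show "g \<in> borel_measurable M \<and> sm g y \<in> W" using g unfolding U1_def by simp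
    qed
    ultimately show "\<exists>U V. openin (L0_top M) U \<and> openin (weak_top M sm T) V \<and> f \<in> U \<and> x \<in> V \<and>
        U \<times> V \<subseteq> {p \<in> borel_measurable M \<times> UNIV. (\<lambda>(f, x). sm f x) p \<in> W}"
      using U1 U2 by blast
  qed
qed

lemma topological_L0_module_weak_top:
  assumes "L0_module M sm"
  shows "topological_L0_module M sm (weak_top M sm T)"
  unfolding topological_L0_module_def
  using assms topspace_weak_top continuous_map_weak_top_add continuous_map_weak_top_scale by blast

section \<open>Stability of the weak neighbourhoods\<close>

lemma E_concat_indicator:
  assumes "countable_concatenation M sm" "is_partition M B"
  shows "sm (indicator (B k)) (E_concat sm B x) = sm (indicator (B k)) (x k)"
proof -
  have "\<exists>!z. \<forall>k. sm (indicator (B k)) z = sm (indicator (B k)) (x k)"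
    using assms unfolding countable_concatenation_def by blast
  from theI'[OF this] show ?thesis unfolding E_concat_def by blast
qed

lemma E_concat_unique:
  assumes "countable_concatenation M sm" "is_partition M B"
    and "\<And>k. sm (indicator (B k)) z = sm (indicator (B k)) (x k)"
  shows "E_concat sm B x = z"
proof -
  have "\<exists>!z. \<forall>k. sm (indicator (B k)) z = sm (indicator (B k)) (x k)"
    using assms unfolding countable_concatenation_def by blast
  then show ?thesis unfolding E_concat_def using assms(3) by (intro the1_equality) auto
qed

lemma L0_dual_E_concat:
  assumes \<mu>: "\<mu> \<in> L0_dual M sm T" and cc: "countable_concatenation M sm" and B: "is_partition M B"
  shows "AE \<omega> in M. \<omega> \<in> B k \<longrightarrow> \<mu> (E_concat sm B x) \<omega> = \<mu> (x k) \<omega>"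
proof -
  have 1: "indicator (B k) \<in> borel_measurable M" using is_partition_sets[OF B] by simp
  from L0_dual_scale[OF \<mu> 1, of "E_concat sm B x"] L0_dual_scale[OF \<mu> 1, of "x k"]
  show ?thesis unfolding E_concat_indicator[OF cc B] by eventually_elim auto
qed

lemma L0_module_indicator_idem:
  assumes "L0_module M sm" "B \<in> sets M"
  shows "sm (indicator B) (sm (indicator B) x) = sm (indicator B) x"
proof -
  have "indicator B \<in> borel_measurable M" using assms(2) by simp
  then have "sm (indicator B) (sm (indicator B) x) = sm (\<lambda>\<omega>. indicator B \<omega> * indicator B \<omega>) x"
    using assms(1) unfolding L0_module_def by metis
  also have "(\<lambda>\<omega>. indicator B \<omega> * indicator B \<omega> :: real) = indicator B"
    by (auto simp: indicator_def fun_eq_iff)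
  finally show ?thesis .
qed

lemma weak_bounded_E_concat:
  assumes cc: "countable_concatenation M sm" and B: "is_partition M B"
    and p: "\<And>k. weak_param M sm T (F k) (A k) (e k)"
    and x: "\<And>k. weak_bounded M (F k) (A k) (e k) (x k)"
  shows "weak_bounded M (\<lambda>n. F (fst (prod_decode n)) (snd (prod_decode n))) (refine_partition B A)
    (L0_concat B e) (E_concat sm B x)"
  unfolding weak_bounded_def
proof (intro allI ballI)
  fix n \<mu> assume "\<mu> \<in> F (fst (prod_decode n)) (snd (prod_decode n))"
  moreover obtain k j where kj: "prod_decode n = (k, j)" by (cases "prod_decode n")
  ultimately have \<mu>F: "\<mu> \<in> F k j" by simp
  from L0_dual_E_concat[OF weak_param_L0_dual[OF p \<mu>F] cc B, of k x]
    x[of k, unfolded weak_bounded_def, rule_format, OF \<mu>F]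
  show "AE \<omega> in M. \<omega> \<in> refine_partition B A n \<longrightarrow> \<bar>\<mu> (E_concat sm B x) \<omega>\<bar> < L0_concat B e \<omega>"
    unfolding refine_partition_def kj by eventually_elim (auto simp: L0_concat_eq[OF B])
qed

lemma weak_bounded_indicator:
  assumes B: "is_partition M B" and p: "\<And>k. weak_param M sm T (F k) (A k) (e k)"
    and x: "weak_bounded M (\<lambda>n. F (fst (prod_decode n)) (snd (prod_decode n))) (refine_partition B A)
      (L0_concat B e) x"
  shows "weak_bounded M (F k) (A k) (e k) (sm (indicator (B k)) x)"
  unfolding weak_bounded_def
proof (intro allI ballI)
  fix j \<mu> assume \<mu>F: "\<mu> \<in> F k j"
  have 1: "indicator (B k) \<in> borel_measurable M" using is_partition_sets[OF B] by simp
  have "\<mu> \<in> F (fst (prod_decode (prod_encode (k, j)))) (snd (prod_decode (prod_encode (k, j))))"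
    using \<mu>F by simp
  then have "AE \<omega> in M. \<omega> \<in> refine_partition B A (prod_encode (k, j)) \<longrightarrow> \<bar>\<mu> x \<omega>\<bar> < L0_concat B e \<omega>"
    using x unfolding weak_bounded_def by blast
  with L0_dual_scale[OF weak_param_L0_dual[OF p \<mu>F] 1, of x] weak_param_pos[OF p[of k]]
  show "AE \<omega> in M. \<omega> \<in> A k j \<longrightarrow> \<bar>\<mu> (sm (indicator (B k)) x) \<omega>\<bar> < e k \<omega>"
    by eventually_elim (auto simp: L0_concat_eq[OF B] indicator_def)
qed

lemma weak_nbhds_stable_set:
  assumes cc: "countable_concatenation M sm" and V: "V \<in> weak_nbhds M sm T"
  shows "stable_set M sm V"
  unfolding stable_set_def
proof (intro allI impI)
  fix B and x :: "nat \<Rightarrow> _" assume B: "is_partition M B" and x: "\<forall>k. x k \<in> V"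
  obtain F A e where p: "weak_param M sm T F A e" and V: "V = {x. weak_bounded M F A e x}"
    using V unfolding weak_nbhds_iff by blast
  show "E_concat sm B x \<in> V" unfolding V weak_bounded_def
  proof (intro CollectI allI ballI)
    fix j \<mu> assume \<mu>F: "\<mu> \<in> F j"
    show "AE \<omega> in M. \<omega> \<in> A j \<longrightarrow> \<bar>\<mu> (E_concat sm B x) \<omega>\<bar> < e \<omega>"
    proof (rule AE_is_partition[OF B])
      fix k
      from L0_dual_E_concat[OF weak_param_L0_dual[OF p \<mu>F] cc B, of k x]
        x[rule_format, of k, unfolded V weak_bounded_def, simplified, rule_format, OF \<mu>F]
      show "AE \<omega> in M. \<omega> \<in> B k \<longrightarrow> \<omega> \<in> A j \<longrightarrow> \<bar>\<mu> (E_concat sm B x) \<omega>\<bar> < e \<omega>"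
        by eventually_elim auto
    qed
  qed
qed

lemma weak_nbhds_set_concat:
  assumes Lm: "L0_module M sm" and cc: "countable_concatenation M sm"
    and B: "is_partition M B" and S: "\<forall>k. S k \<in> weak_nbhds M sm T"
  shows "set_concat sm B S \<in> weak_nbhds M sm T"
proof -
  obtain F A e where p: "\<And>k. weak_param M sm T (F k) (A k) (e k)"
    and S_eq: "\<And>k. S k = {x. weak_bounded M (F k) (A k) (e k) x}"
    using S unfolding weak_nbhds_iff by metis
  define F' where "F' = (\<lambda>n. F (fst (prod_decode n)) (snd (prod_decode n)))"
  have "is_partition M (refine_partition B A)"
    by (rule is_partition_refine_partition[OF B weak_param_partition[OF p]])
  moreover have "L0_concat B e \<in> borel_measurable M"
    by (rule borel_measurable_L0_concat[OF B]) (use p in \<open>auto simp: weak_param_def\<close>)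
  moreover have "AE \<omega> in M. 0 < L0_concat B e \<omega>"
  proof (rule AE_is_partition[OF B])
    fix k show "AE \<omega> in M. \<omega> \<in> B k \<longrightarrow> 0 < L0_concat B e \<omega>"
      using weak_param_pos[OF p[of k]] by eventually_elim (auto simp: L0_concat_eq[OF B])
  qed
  ultimately have p': "weak_param M sm T F' (refine_partition B A) (L0_concat B e)"
    using p unfolding F'_def weak_param_def by blast
  have "set_concat sm B S = {x. weak_bounded M F' (refine_partition B A) (L0_concat B e) x}"
  proof (intro set_eqI iffI)
    fix x assume "x \<in> set_concat sm B S"
    then show "x \<in> {x. weak_bounded M F' (refine_partition B A) (L0_concat B e) x}"
      unfolding set_concat_def S_eq F'_def using weak_bounded_E_concat[OF cc B, where F=F and A=A and e=e, OF p] by auto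
  next
    fix x assume "x \<in> {x. weak_bounded M F' (refine_partition B A) (L0_concat B e) x}"
    then have "\<forall>k. sm (indicator (B k)) x \<in> S k"
      unfolding S_eq F'_def using weak_bounded_indicator[OF B, where F=F and A=A and e=e, OF p] by blast
    moreover have "E_concat sm B (\<lambda>k. sm (indicator (B k)) x) = x"
      by (rule E_concat_unique[OF cc B])
        (simp add: L0_module_indicator_idem[OF Lm is_partition_sets[OF B]])
    ultimately show "x \<in> set_concat sm B S" unfolding set_concat_def by force
  qed
  with p' show ?thesis unfolding weak_nbhds_iff by blast
qed

lemma stable_collection_weak_nbhds:
  assumes "L0_module M sm" "countable_concatenation M sm"
  shows "stable_collection M sm (weak_nbhds M sm T)"
  unfolding stable_collection_def
  using weak_nbhds_stable_set[OF assms(2)] weak_nbhds_set_concat[OF assms] by blast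

section \<open>Convexity, absorption and balance\<close>

lemma abs_convex_comb_less:
  fixes l a b e :: real
  assumes "0 \<le> l" "l \<le> 1" "\<bar>a\<bar> < e" "\<bar>b\<bar> < e"
  shows "\<bar>l * a + (1 - l) * b\<bar> < e"
proof -
  have "\<bar>l * a + (1 - l) * b\<bar> \<le> l * \<bar>a\<bar> + (1 - l) * \<bar>b\<bar>"
    using abs_triangle_ineq[of "l * a" "(1 - l) * b"] assms by (simp add: abs_mult)
  also have "\<dots> < l * e + (1 - l) * e"
  proof (cases "l = 0")
    case False
    then have "l * \<bar>a\<bar> < l * e" using assms by simp
    moreover have "(1 - l) * \<bar>b\<bar> \<le> (1 - l) * e" using assms by (intro mult_left_mono) auto
    ultimately show ?thesis by linarith
  qed (use assms in simp)
  also have "\<dots> = e" by (simp add: algebra_simps)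
  finally show ?thesis .
qed

lemma weak_nbhds_convex:
  assumes "V \<in> weak_nbhds M sm T"
  shows "L0_convex M sm V"
  unfolding L0_convex_def
proof (intro ballI impI)
  obtain F A e where p: "weak_param M sm T F A e" and V: "V = {x. weak_bounded M F A e x}"
    using assms unfolding weak_nbhds_iff by blast
  fix x y and l :: "_ \<Rightarrow> real" assume x: "x \<in> V" and y: "y \<in> V" and l: "l \<in> borel_measurable M"
    and l01: "AE \<omega> in M. 0 \<le> l \<omega> \<and> l \<omega> \<le> 1"
  have l': "(\<lambda>\<omega>. 1 - l \<omega>) \<in> borel_measurable M" using l by measurable
  show "sm l x + sm (\<lambda>\<omega>. 1 - l \<omega>) y \<in> V" unfolding V weak_bounded_def
  proof (intro CollectI allI ballI)
    fix k \<mu> assume \<mu>F: "\<mu> \<in> F k"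
    have \<mu>: "\<mu> \<in> L0_dual M sm T" by (rule weak_param_L0_dual[OF p \<mu>F])
    from x y have "AE \<omega> in M. \<omega> \<in> A k \<longrightarrow> \<bar>\<mu> x \<omega>\<bar> < e \<omega>" "AE \<omega> in M. \<omega> \<in> A k \<longrightarrow> \<bar>\<mu> y \<omega>\<bar> < e \<omega>"
      using \<mu>F unfolding V weak_bounded_def by blast+
    with l01 L0_dual_scale[OF \<mu> l, of x] L0_dual_scale[OF \<mu> l', of y]
      L0_dual_add[OF \<mu>, of "sm l x" "sm (\<lambda>\<omega>. 1 - l \<omega>) y"]
    show "AE \<omega> in M. \<omega> \<in> A k \<longrightarrow> \<bar>\<mu> (sm l x + sm (\<lambda>\<omega>. 1 - l \<omega>) y) \<omega>\<bar> < e \<omega>"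
      by eventually_elim (use abs_convex_comb_less in auto)
  qed
qed

lemma weak_nbhds_balanced:
  assumes "V \<in> weak_nbhds M sm T"
  shows "L0_balanced M sm V"
  unfolding L0_balanced_def
proof (intro ballI impI)
  obtain F A e where p: "weak_param M sm T F A e" and V: "V = {x. weak_bounded M F A e x}"
    using assms unfolding weak_nbhds_iff by blast
  fix x and l :: "_ \<Rightarrow> real"
  assume x: "x \<in> V" and l: "l \<in> borel_measurable M" and l1: "AE \<omega> in M. \<bar>l \<omega>\<bar> \<le> 1"
  show "sm l x \<in> V" unfolding V weak_bounded_def
  proof (intro CollectI allI ballI)
    fix k \<mu> assume \<mu>F: "\<mu> \<in> F k"
    have "AE \<omega> in M. \<omega> \<in> A k \<longrightarrow> \<bar>\<mu> x \<omega>\<bar> < e \<omega>" using x \<mu>F unfolding V weak_bounded_def by blast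
    with L0_dual_scale[OF weak_param_L0_dual[OF p \<mu>F] l, of x] l1
    show "AE \<omega> in M. \<omega> \<in> A k \<longrightarrow> \<bar>\<mu> (sm l x) \<omega>\<bar> < e \<omega>"
    proof eventually_elim
      case (elim \<omega>)
      have "\<bar>l \<omega> * \<mu> x \<omega>\<bar> \<le> \<bar>\<mu> x \<omega>\<bar>" unfolding abs_mult using elim(2)
        by (simp add: mult_left_le_one_le)
      then show ?case using elim by auto
    qed
  qed
qed

lemma abs_scaled_less:
  fixes a B e :: real
  assumes "\<bar>a\<bar> \<le> B" "0 < e"
  shows "\<bar>1 / (1 + B / e) * a\<bar> < e"
proof -
  have pos: "0 < 1 + B / e" using assms by (simp add: add_pos_nonneg)
  have "e * \<bar>a\<bar> \<le> e * B" using assms by (intro mult_left_mono) auto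
  moreover have "0 < e * e" using assms by simp
  ultimately have "e * \<bar>a\<bar> < B * e + e * e" by (simp add: mult.commute)
  then have "\<bar>a\<bar> / (1 + B / e) < e" using pos assms by (simp add: divide_less_eq field_simps)
  then show ?thesis using pos by (simp add: abs_mult)
qed

lemma weak_nbhds_absorbing:
  assumes Lm: "L0_module M sm" and "V \<in> weak_nbhds M sm T"
  shows "L0_absorbing M sm V"
  unfolding L0_absorbing_def
proof
  fix x
  obtain F A e where p: "weak_param M sm T F A e" and V: "V = {x. weak_bounded M F A e x}"
    using assms(2) unfolding weak_nbhds_iff by blast
  have e: "e \<in> borel_measurable M" and e_pos: "AE \<omega> in M. 0 < e \<omega>"
    using p unfolding weak_param_def by auto
  define l where "l = (\<lambda>\<omega>. 1 + weak_gauge F A x \<omega> / e \<omega>)"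
  have l: "l \<in> borel_measurable M" unfolding l_def using borel_measurable_weak_gauge[OF p] e by measurable
  have l_pos: "AE \<omega> in M. 0 < l \<omega>"
    using e_pos AE_space by eventually_elim
      (use weak_gauge_nonneg[OF p] in \<open>auto simp: l_def intro!: add_pos_nonneg\<close>)
  have il: "(\<lambda>\<omega>. 1 / l \<omega>) \<in> borel_measurable M" using l by measurable
  define c where "c = sm (\<lambda>\<omega>. 1 / l \<omega>) x"
  have "sm l c = sm (\<lambda>\<omega>. l \<omega> * (1 / l \<omega>)) x"
    using Lm l il unfolding c_def L0_module_def by metis
  also have "\<dots> = sm (\<lambda>\<omega>. 1) x"
  proof -
    have "(\<lambda>\<omega>. l \<omega> * (1 / l \<omega>)) \<in> borel_measurable M" using l by measurable
    moreover have "AE \<omega> in M. l \<omega> * (1 / l \<omega>) = 1" using l_pos by eventually_elim simp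
    ultimately show ?thesis
      using Lm[unfolded L0_module_def, THEN conjunct1, rule_format, OF _ borel_measurable_const]
      by blast
  qed
  also have "\<dots> = x" using Lm unfolding L0_module_def by blast
  finally have x: "x = sm l c" by simp
  have "c \<in> V" unfolding V weak_bounded_def
  proof (intro CollectI allI ballI)
    fix k \<mu> assume \<mu>F: "\<mu> \<in> F k"
    from L0_dual_scale[OF weak_param_L0_dual[OF p \<mu>F] il, of x] e_pos
    show "AE \<omega> in M. \<omega> \<in> A k \<longrightarrow> \<bar>\<mu> c \<omega>\<bar> < e \<omega>"
      by eventually_elim (use abs_scaled_less[OF weak_gauge_ge[OF p _ \<mu>F]] in \<open>auto simp: c_def l_def\<close>)
  qed
  with l l_pos x show "\<exists>l\<in>borel_measurable M. (AE \<omega> in M. 0 < l \<omega>) \<and> (\<exists>c\<in>V. x = sm l c)"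
    by blast
qed

theorem mainTheorem3:
  fixes M :: "'w measure"
    and sm :: "('w \<Rightarrow> real) \<Rightarrow> 'e::ab_group_add \<Rightarrow> 'e"
    and T :: "'e topology"
  assumes "prob_space M"
    and "stable_lc_L0_module M sm T"
  shows "\<exists>T'. stable_lc_L0_module M sm T' \<and>
    nhds_base T' 0 {weak_nbhd M F A e | F A e.
       is_partition M A \<and>
       (\<forall>k. finite (F k) \<and> F k \<noteq> {} \<and> F k \<subseteq> L0_dual M sm T) \<and>
       e \<in> borel_measurable M \<and> (AE \<omega> in M. 0 < e \<omega>)}"
proof -
  have module: "L0_module M sm" and cc: "countable_concatenation M sm"
    using assms(2) unfolding stable_lc_L0_module_def topological_L0_module_def by auto
  have "\<forall>V\<in>weak_nbhds M sm T. L0_convex M sm V \<and> L0_absorbing M sm V \<and> L0_balanced M sm V"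
    using weak_nbhds_convex weak_nbhds_absorbing[OF module] weak_nbhds_balanced by blast
  then have "stable_lc_L0_module M sm (weak_top M sm T)"
    unfolding stable_lc_L0_module_def
    using topological_L0_module_weak_top[OF module] cc nhds_base_weak_top
      stable_collection_weak_nbhds[OF module cc] by blast
  with nhds_base_weak_top show ?thesis unfolding weak_nbhds_def by blast
qed

end
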